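(* Let $\lambda \geq 2$ be an integer and let $H$ be a graph with $\lambda^2+2$ vertices having at least one isolated vertex. Then $\lambda_{\min}(\mathfrak{q}(H)) < -\lambda$.
   Context: A Hoffman graph is a graph whose vertices are labelled "fat" or "slim", such that fat vertices are pairwise non-adjacent and each fat vertex has at least one slim neighbour. If $A_s$ is the adjacency matrix of the subgraph induced on the slim vertices and $C$ is the slim-by-fat adjacency matrix, the special matrix is $S = A_s - CC^T$, and the eigenvalues of the Hoffman graph are those of $S$; $\lambda_{\min}$ denotes the smallest one. For a graph $H$, $\mathfrak{q}(H)$ is the Hoffman graph whose slim vertices induce $H$ and which has a single fat vertex adjacent to all vertices of $H$ (so its special matrix is $A(H) - J$, with $J$ the all-ones matrix). *)

theory Defs
  imports "Jordan_Normal_Form.Char_Poly"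
begin

definition simple_graph :: "nat \<Rightarrow> (nat \<Rightarrow> nat \<Rightarrow> bool) \<Rightarrow> bool" where
  "simple_graph n E \<longleftrightarrow> (\<forall>i<n. \<forall>j<n. E i j \<longleftrightarrow> E j i) \<and> (\<forall>i<n. \<not> E i i)"

definition adj_matrix :: "nat \<Rightarrow> (nat \<Rightarrow> nat \<Rightarrow> bool) \<Rightarrow> real mat" where
  "adj_matrix n E = mat n n (\<lambda>(i,j). if E i j then 1 else 0)"

definition isolated_vertex :: "nat \<Rightarrow> (nat \<Rightarrow> nat \<Rightarrow> bool) \<Rightarrow> nat \<Rightarrow> bool" where
  "isolated_vertex n E v \<longleftrightarrow> v < n \<and> (\<forall>u<n. \<not> E v u)"

text \<open>Special matrix of the Hoffman graph q(H): slim part A(H), one fat vertex adjacent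
  to all slim vertices, so S = A(H) - C C^T = A(H) - J.\<close>
definition special_matrix_q :: "nat \<Rightarrow> (nat \<Rightarrow> nat \<Rightarrow> bool) \<Rightarrow> real mat" where
  "special_matrix_q n E = adj_matrix n E - mat n n (\<lambda>_. 1)"

definition lambda_min :: "real mat \<Rightarrow> real" where
  "lambda_min S = Min {\<mu>. eigenvalue S \<mu>}"

end

theory Submission imports Defs "HOL-Analysis.Function_Topology" begin

(* The smallest eigenvalue of a real symmetric matrix is the minimum of its Rayleigh quotient,
   so it suffices to exhibit one test vector with a small quotient. For the vector z with
   z v = \<lambda> at the isolated vertex v and z i = 1 elsewhere, the adjacency part contributes at
   most (n-1)(n-2) = \<lambda>\<^sup>2(\<lambda>\<^sup>2+1) and the all-ones part exactly -(\<lambda>\<^sup>2+\<lambda>+1)\<^sup>2, while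
   the squared norm is 2\<lambda>\<^sup>2+1; hence z\<^sup>T S z \<le> -2\<lambda>\<^sup>3-2\<lambda>\<^sup>2-2\<lambda>-1 < -\<lambda> (2\<lambda>\<^sup>2+1). *)

definition quad_form :: "nat \<Rightarrow> (nat \<Rightarrow> nat \<Rightarrow> real) \<Rightarrow> (nat \<Rightarrow> real) \<Rightarrow> real" where
  "quad_form n M z = (\<Sum>i<n. \<Sum>j<n. M i j * z i * z j)"

definition norm2 :: "nat \<Rightarrow> (nat \<Rightarrow> real) \<Rightarrow> real" where
  "norm2 n z = (\<Sum>i<n. (z i)^2)"

lemma norm2_nonneg: "0 \<le> norm2 n z"
  unfolding norm2_def by (simp add: sum_nonneg)

lemma norm2_eq_0_iff: "norm2 n z = 0 \<longleftrightarrow> (\<forall>i<n. z i = 0)"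
  unfolding norm2_def by (subst sum_nonneg_eq_0_iff) auto

lemma quad_form_scale: "quad_form n M (\<lambda>i. z i / c) = quad_form n M z / c^2"
  unfolding quad_form_def by (simp add: sum_divide_distrib power2_eq_square)

lemma norm2_scale: "norm2 n (\<lambda>i. z i / c) = norm2 n z / c^2"
  unfolding norm2_def by (simp add: sum_divide_distrib power_divide)

lemma quad_form_cong: "(\<And>i. i < n \<Longrightarrow> y i = z i) \<Longrightarrow> quad_form n M y = quad_form n M z"
  unfolding quad_form_def by simp

lemma norm2_cong: "(\<And>i. i < n \<Longrightarrow> y i = z i) \<Longrightarrow> norm2 n y = norm2 n z"
  unfolding norm2_def by simp

lemma quad_form_add_scaled:
  assumes sym: "\<And>i j. i < n \<Longrightarrow> j < n \<Longrightarrow> M i j = M j i"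
  shows "quad_form n M (\<lambda>i. x i + t * y i) =
    quad_form n M x + t * (2 * (\<Sum>i<n. \<Sum>j<n. M i j * x i * y j)) + t^2 * quad_form n M y"
proof -
  have swap: "(\<Sum>i<n. \<Sum>j<n. M i j * y i * x j) = (\<Sum>i<n. \<Sum>j<n. M i j * x i * y j)"
    by (subst sum.swap) (auto intro!: sum.cong simp: sym mult_ac)
  have "\<And>i j. M i j * (x i + t * y i) * (x j + t * y j) =
     M i j * x i * x j + t * (M i j * x i * y j) + t * (M i j * y i * x j) + t^2 * (M i j * y i * y j)"
    by (simp add: algebra_simps power2_eq_square)
  then have "quad_form n M (\<lambda>i. x i + t * y i) = quad_form n M x
      + t * (\<Sum>i<n. \<Sum>j<n. M i j * x i * y j) + t * (\<Sum>i<n. \<Sum>j<n. M i j * y i * x j)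
      + t^2 * quad_form n M y"
    unfolding quad_form_def by (simp add: sum.distrib sum_distrib_left)
  then show ?thesis
    unfolding swap by (simp add: algebra_simps)
qed

lemma norm2_add_scaled:
  "norm2 n (\<lambda>i. x i + t * y i) = norm2 n x + t * (2 * (\<Sum>i<n. x i * y i)) + t^2 * norm2 n y"
proof -
  have "\<And>i. (x i + t * y i)^2 = (x i)^2 + t * (2 * (x i * y i)) + t^2 * (y i)^2"
    by (simp add: algebra_simps power2_eq_square)
  then show ?thesis
    unfolding norm2_def by (simp add: sum.distrib sum_distrib_left)
qed

lemma linear_coeff_zero_if_nonneg:
  fixes a b :: real
  assumes nonneg: "\<And>t. 0 \<le> a * t + b * t^2"
  shows "a = 0"
proof (rule ccontr)
  assume a: "a \<noteq> 0"
  define c where "c = \<bar>b\<bar> + 1"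
  have c: "c > 0" "b - c < 0" unfolding c_def by auto
  have "0 \<le> a * (- a / c) + b * (- a / c)^2" by (rule nonneg)
  also have "\<dots> = a^2 / c^2 * (b - c)"
    using c by (simp add: field_simps power2_eq_square)
  also have "\<dots> < 0"
    using a c by (intro mult_pos_neg) auto
  finally show False by simp
qed

(* Pinning the coordinates i \<ge> n to 0 and adding the (redundant) box constraint makes
   compactness in the product topology on nat \<Rightarrow> real immediate. *)
definition unit_sphere_fun :: "nat \<Rightarrow> (nat \<Rightarrow> real) set" where
  "unit_sphere_fun n = Pi UNIV (\<lambda>i. if i < n then {-1..1} else {0}) \<inter> {f. norm2 n f = 1}"

lemma compact_unit_sphere_fun: "compact (unit_sphere_fun n)"
  unfolding unit_sphere_fun_def
proof (rule compact_Int_closed)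
  have "compactin (product_topology (\<lambda>i. euclidean) UNIV)
      (PiE UNIV (\<lambda>i. if i < n then {-1..1::real} else {0}))"
    by (subst compactin_PiE) auto
  then show "compact (Pi UNIV (\<lambda>i. if i < n then {-1..1::real} else {0}))"
    by (metis euclidean_product_topology compactin_euclidean_iff PiE_UNIV_domain)
  have "continuous_on UNIV (norm2 n)"
    unfolding norm2_def
    by (intro continuous_on_sum continuous_on_power continuous_on_product_coordinates)
  then show "closed {f. norm2 n f = 1}"
    by (rule closed_Collect_eq) (rule continuous_on_const)
qed

lemma normalized_in_unit_sphere_fun:
  assumes "norm2 n z \<noteq> 0"
  shows "(\<lambda>i. if i < n then z i / sqrt (norm2 n z) else 0) \<in> unit_sphere_fun n"
    (is "?f \<in> _")
proof -
  have "norm2 n ?f = norm2 n (\<lambda>i. z i / sqrt (norm2 n z))"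
    by (rule norm2_cong) simp
  then have norm_f: "norm2 n ?f = 1"
    using assms norm2_nonneg[of n z] by (simp add: norm2_scale)
  have abs_f: "\<bar>?f i\<bar> \<le> 1" if "i < n" for i
  proof -
    have "(?f i)^2 \<le> norm2 n ?f"
      unfolding norm2_def using that by (intro member_le_sum) auto
    then show ?thesis using norm_f abs_le_square_iff[of "?f i" 1] by simp
  qed
  have "?f i \<in> (if i < n then {-1..1} else {0})" for i
  proof (cases "i < n")
    case True
    with abs_f[OF True] show ?thesis by (simp only: abs_le_iff atLeastAtMost_iff if_True) simp
  qed simp
  then show ?thesis
    using norm_f unfolding unit_sphere_fun_def by auto
qed

lemma rayleigh_bound_if_bound_on_unit_sphere_fun:
  assumes bound: "\<And>f. f \<in> unit_sphere_fun n \<Longrightarrow> \<mu> \<le> quad_form n M f"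
  shows "\<mu> * norm2 n z \<le> quad_form n M z"
proof (cases "norm2 n z = 0")
  case True
  then have "quad_form n M z = quad_form n M (\<lambda>_. 0)"
    by (intro quad_form_cong) (simp add: norm2_eq_0_iff)
  then show ?thesis using True by (simp add: quad_form_def)
next
  case False
  define s where "s = sqrt (norm2 n z)"
  have s: "0 < s^2" "s^2 = norm2 n z"
    using False norm2_nonneg[of n z] unfolding s_def by auto
  have "\<mu> \<le> quad_form n M (\<lambda>i. if i < n then z i / s else 0)"
    using bound normalized_in_unit_sphere_fun[OF False] unfolding s_def by blast
  also have "\<dots> = quad_form n M z / s^2"
    by (subst quad_form_cong[where z="\<lambda>i. z i / s"]) (simp_all add: quad_form_scale)
  finally show ?thesis
    using s by (simp add: pos_le_divide_eq)
qed

lemma quad_form_min_on_sphere: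
  assumes "0 < n"
  obtains x where "norm2 n x = 1" "\<And>z. quad_form n M x * norm2 n z \<le> quad_form n M z"
proof -
  have "norm2 n (\<lambda>i. if i = 0 then 1 else 0) = (\<Sum>i<n. if i = 0 then 1 else 0)"
    unfolding norm2_def by (intro sum.cong) auto
  then have "(\<lambda>i. if i = 0 then 1 else 0) \<in> unit_sphere_fun n"
    using assms unfolding unit_sphere_fun_def by auto
  moreover have "continuous_on UNIV (quad_form n M)"
    unfolding quad_form_def
    by (intro continuous_on_sum continuous_on_mult continuous_on_const
        continuous_on_product_coordinates)
  then have "continuous_on (unit_sphere_fun n) (quad_form n M)"
    by (rule continuous_on_subset) simp
  ultimately obtain x where "x \<in> unit_sphere_fun n"
    and "\<And>f. f \<in> unit_sphere_fun n \<Longrightarrow> quad_form n M x \<le> quad_form n M f"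
    using continuous_attains_inf[OF compact_unit_sphere_fun] by blast
  then show ?thesis
    using that rayleigh_bound_if_bound_on_unit_sphere_fun unfolding unit_sphere_fun_def by blast
qed

(* First-order condition: the form quad_form - \<mu> norm2 is nonnegative and vanishes at x,
   so its derivative at x in every direction y vanishes. *)
lemma eigen_equation_if_minimizer:
  assumes sym: "\<And>i j. i < n \<Longrightarrow> j < n \<Longrightarrow> M i j = M j i"
    and bound: "\<And>z. \<mu> * norm2 n z \<le> quad_form n M z"
    and attained: "quad_form n M x = \<mu> * norm2 n x"
    and "k < n"
  shows "(\<Sum>i<n. M k i * x i) = \<mu> * x k"
proof -
  define y where "y i = (if i = k then 1 else 0 :: real)" for i
  define B where "B = (\<Sum>i<n. \<Sum>j<n. M i j * x i * y j)"
  define D where "D = (\<Sum>i<n. x i * y i)"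
  have "0 \<le> (2 * B - 2 * \<mu> * D) * t + (quad_form n M y - \<mu> * norm2 n y) * t^2" for t
    using bound[of "\<lambda>i. x i + t * y i"] quad_form_add_scaled[OF sym, where x=x and t=t and y=y]
      norm2_add_scaled[of n x t y] attained
    unfolding B_def D_def by (simp add: algebra_simps)
  then have "B = \<mu> * D"
    using linear_coeff_zero_if_nonneg by fastforce
  moreover have "B = (\<Sum>i<n. M k i * x i)"
    using \<open>k < n\<close> unfolding B_def y_def by (simp add: if_distrib sym cong: if_cong)
  moreover have "D = x k"
    using \<open>k < n\<close> unfolding D_def y_def by (simp add: if_distrib cong: if_cong)
  ultimately show ?thesis by simp
qed

lemma eigenvalue_if_eigen_equation:
  fixes S :: "real mat"
  assumes S: "S \<in> carrier_mat n n"
    and nonzero: "\<exists>k<n. x k \<noteq> 0"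
    and eq: "\<And>k. k < n \<Longrightarrow> (\<Sum>i<n. S $$ (k, i) * x i) = \<mu> * x k"
  shows "eigenvalue S \<mu>"
  unfolding eigenvalue_def eigenvector_def
proof (intro exI[of _ "vec n x"] conjI)
  show "vec n x \<in> carrier_vec (dim_row S)" using S by simp
  show "vec n x \<noteq> 0\<^sub>v (dim_row S)"
    using S nonzero by (auto simp: vec_eq_iff)
  show "S *\<^sub>v vec n x = \<mu> \<cdot>\<^sub>v vec n x"
    using S eq by (auto simp: vec_eq_iff scalar_prod_def lessThan_atLeast0)
qed

lemma lambda_min_le_eigenvalue:
  fixes S :: "real mat"
  assumes S: "S \<in> carrier_mat n n" and "eigenvalue S \<mu>"
  shows "lambda_min S \<le> \<mu>"
proof -
  have "char_poly S \<noteq> 0" using degree_monic_char_poly[OF S] by auto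
  then have "finite {\<mu>. poly (char_poly S) \<mu> = 0}" by (rule poly_roots_finite)
  then have "finite {\<mu>. eigenvalue S \<mu>}"
    by (rule finite_subset[rotated]) (auto simp: eigenvalue_root_char_poly[OF S])
  then show ?thesis
    unfolding lambda_min_def using assms(2) by (intro Min_le) auto
qed

lemma lambda_min_le_rayleigh:
  fixes S :: "real mat"
  assumes S: "S \<in> carrier_mat n n" and "0 < n"
    and sym: "\<And>i j. i < n \<Longrightarrow> j < n \<Longrightarrow> S $$ (i, j) = S $$ (j, i)"
  shows "lambda_min S * norm2 n z \<le> quad_form n (\<lambda>i j. S $$ (i, j)) z"
proof -
  let ?M = "\<lambda>i j. S $$ (i, j)"
  obtain x where x: "norm2 n x = 1" and min: "\<And>z. quad_form n ?M x * norm2 n z \<le> quad_form n ?M z"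
    using quad_form_min_on_sphere[OF \<open>0 < n\<close>] by blast
  define \<mu> where "\<mu> = quad_form n ?M x"
  have "\<exists>k<n. x k \<noteq> 0"
    using x norm2_eq_0_iff[of n x] by auto
  moreover have "(\<Sum>i<n. S $$ (k, i) * x i) = \<mu> * x k" if "k < n" for k
    using eigen_equation_if_minimizer[of n ?M \<mu> x k] sym min x that unfolding \<mu>_def by simp
  ultimately have "lambda_min S \<le> \<mu>"
    using lambda_min_le_eigenvalue[OF S] eigenvalue_if_eigen_equation[OF S] by blast
  then have "lambda_min S * norm2 n z \<le> \<mu> * norm2 n z"
    using norm2_nonneg by (rule mult_right_mono)
  also have "\<dots> \<le> quad_form n ?M z"
    using min unfolding \<mu>_def .
  finally show ?thesis .
qed

lemma special_matrix_q_carrier: "special_matrix_q n E \<in> carrier_mat n n"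
  unfolding special_matrix_q_def adj_matrix_def by (simp add: minus_carrier_mat)

lemma special_matrix_q_index:
  "i < n \<Longrightarrow> j < n \<Longrightarrow> special_matrix_q n E $$ (i, j) = (if E i j then 1 else 0) - 1"
  unfolding special_matrix_q_def adj_matrix_def by simp

lemma sum_indicator_plus_const:
  "v < n \<Longrightarrow> (\<Sum>i<n. if i = v then a else b) = a + (real n - 1) * b"
proof -
  assume "v < n"
  then have "(\<Sum>i<n. if i = v then a else b) = (\<Sum>i<n. b + (if i = v then a - b else 0))"
    by (intro sum.cong) auto
  also have "\<dots> = real n * b + (a - b)"
    using \<open>v < n\<close> by (simp add: sum.distrib)
  finally show ?thesis by (simp add: algebra_simps)
qed

(* w is the indicator of the non-isolated vertices; the pointwise bound compares the adjacency
   matrix with that of the complete graph on them. *)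
lemma quad_form_special_matrix_q_isolated:
  assumes G: "simple_graph n E" and v: "isolated_vertex n E v"
  shows "quad_form n (\<lambda>i j. special_matrix_q n E $$ (i, j)) (\<lambda>i. if i = v then t else 1)
    \<le> (real n - 1)^2 - (real n - 1) - (t + (real n - 1))^2"
proof -
  define z where "z i = (if i = v then t else 1)" for i
  define w where "w i = (if i = v then 0 else 1 :: real)" for i
  have vn: "v < n" using v unfolding isolated_vertex_def by simp
  have adj: "(if E i j then 1 else 0) * z i * z j \<le> w i * w j - (if i = j then w i else 0)"
    if "i < n" "j < n" for i j
    using that v G unfolding isolated_vertex_def simple_graph_def z_def w_def by auto
  have sum_z: "(\<Sum>i<n. z i) = t + (real n - 1)" and sum_w: "(\<Sum>i<n. w i) = real n - 1"
    using vn unfolding z_def w_def by (simp_all add: sum_indicator_plus_const)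
  have "quad_form n (\<lambda>i j. special_matrix_q n E $$ (i, j)) z
      = (\<Sum>i<n. \<Sum>j<n. (if E i j then 1 else 0) * z i * z j) - (\<Sum>i<n. \<Sum>j<n. z i * z j)"
    unfolding quad_form_def by (simp add: special_matrix_q_index algebra_simps sum_subtractf)
  also have "\<dots> \<le> (\<Sum>i<n. \<Sum>j<n. w i * w j - (if i = j then w i else 0)) - (\<Sum>i<n. \<Sum>j<n. z i * z j)"
    using adj by (intro diff_right_mono sum_mono) auto
  also have "\<dots> = (\<Sum>i<n. w i) * (\<Sum>j<n. w j) - (\<Sum>i<n. w i) - (\<Sum>i<n. z i) * (\<Sum>j<n. z j)"
    by (simp add: sum_subtractf sum_product)
  finally show ?thesis
    using sum_z sum_w unfolding z_def by (simp add: power2_eq_square)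
qed

lemma lambda_min_special_matrix_q_isolated:
  assumes G: "simple_graph n E" and v: "isolated_vertex n E v"
  shows "lambda_min (special_matrix_q n E) * (t^2 + (real n - 1))
    \<le> (real n - 1)^2 - (real n - 1) - (t + (real n - 1))^2"
proof -
  define z where "z i = (if i = v then t else 1)" for i
  have vn: "v < n" using v unfolding isolated_vertex_def by simp
  have "norm2 n z = (\<Sum>i<n. if i = v then t^2 else 1)"
    unfolding norm2_def z_def by (intro sum.cong) auto
  also have "\<dots> = t^2 + (real n - 1)"
    using vn by (simp add: sum_indicator_plus_const)
  finally have norm_z: "norm2 n z = t^2 + (real n - 1)" .
  have "lambda_min (special_matrix_q n E) * norm2 n z
      \<le> quad_form n (\<lambda>i j. special_matrix_q n E $$ (i, j)) z"
    using G vn unfolding simple_graph_def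
    by (intro lambda_min_le_rayleigh special_matrix_q_carrier) (auto simp: special_matrix_q_index)
  also have "\<dots> \<le> (real n - 1)^2 - (real n - 1) - (t + (real n - 1))^2"
    using quad_form_special_matrix_q_isolated[OF G v] unfolding z_def .
  finally show ?thesis
    unfolding norm_z .
qed

theorem mainTheorem3:
  fixes lam :: nat and E :: "nat \<Rightarrow> nat \<Rightarrow> bool"
  assumes "lam \<ge> 2"
    and "simple_graph (lam^2 + 2) E"
    and "\<exists>v. isolated_vertex (lam^2 + 2) E v"
  shows "lambda_min (special_matrix_q (lam^2 + 2) E) < - real lam"
proof -
  define L where "L = real lam"
  define \<theta> where "\<theta> = lambda_min (special_matrix_q (lam^2 + 2) E)"
  have n: "real (lam^2 + 2) = L^2 + 2" unfolding L_def by simp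
  have "\<theta> * (L^2 + (real (lam^2 + 2) - 1))
      \<le> (real (lam^2 + 2) - 1)^2 - (real (lam^2 + 2) - 1) - (L + (real (lam^2 + 2) - 1))^2"
    using assms(2,3) lambda_min_special_matrix_q_isolated unfolding \<theta>_def by blast
  then have "\<theta> * (2 * L^2 + 1) \<le> - L * (2 * L^2 + 1) - (2 * L^2 + L + 1)"
    unfolding n by (simp add: algebra_simps power2_eq_square)
  moreover have "0 \<le> L" "0 < 2 * L^2 + 1"
    unfolding L_def by (simp, intro add_nonneg_pos) simp_all
  ultimately have "\<theta> < - L"
    by (smt (verit, best) mult_le_cancel_right zero_le_power2)
  then show ?thesis unfolding \<theta>_def L_def .
qed

end
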